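(* Let $1\le k<n$, let $C=[c_{ij}]$ be an $n\times n$ pairwise comparison matrix (all entries positive, $c_{ij}=1/c_{ji}$, $c_{ii}=1$), and let $C_k$ be its upper-left $k\times k$ submatrix. Let $A_k=I_k-\frac{1}{n-1}(C_k-I_k)$, i.e. $A_k$ has entries $1$ on the diagonal and $-\frac{1}{n-1}c_{ij}$ off the diagonal ($1\le i\ne j\le k$). If $k=1$, or if $1<k<n$ and $\mathit{CI}(C_k)<\frac{n-k}{k-1}$, then $A_k$ is invertible; consequently, for any positive reference weights $w(a_{k+1}),\dots,w(a_n)$, the arithmetic HRE system $A_k w=b$, where $w=(w(a_1),\dots,w(a_k))^T$ and $b_i=\frac{1}{n-1}\sum_{j=k+1}^n c_{ij}w(a_j)$ for $i=1,\dots,k$, has a unique solution.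
   Context: Alternatives $a_1,\dots,a_n$; $a_1,\dots,a_k$ have unknown weights and $a_{k+1},\dots,a_n$ are reference alternatives with known positive weights $w(a_{k+1}),\dots,w(a_n)$. For a $k\times k$ pairwise comparison matrix $M$ with $k\ge 2$, Saaty's consistency index is $\mathit{CI}(M)=\frac{\rho(M)-k}{k-1}$, where $\rho(M)$ is the spectral radius of $M$ (which, for a positive matrix, is its Perron eigenvalue). *)

theory Defs
  imports "Jordan_Normal_Form.Matrix" "Jordan_Normal_Form.Spectral_Radius"
begin

definition pc_matrix :: "nat \<Rightarrow> real mat \<Rightarrow> bool" where
  "pc_matrix n C \<longleftrightarrow> C \<in> carrier_mat n n \<and>
     (\<forall>i<n. \<forall>j<n. C $$ (i,j) > 0 \<and> C $$ (i,j) = 1 / C $$ (j,i)) \<and>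
     (\<forall>i<n. C $$ (i,i) = 1)"

definition upper_left :: "nat \<Rightarrow> real mat \<Rightarrow> real mat" where
  "upper_left k C = mat k k (\<lambda>(i,j). C $$ (i,j))"

definition CI :: "real mat \<Rightarrow> real" where
  "CI M = (spectral_radius (map_mat complex_of_real M) - real (dim_row M))
          / (real (dim_row M) - 1)"

definition HRE_A :: "nat \<Rightarrow> nat \<Rightarrow> real mat \<Rightarrow> real mat" where
  "HRE_A n k C = 1\<^sub>m k - (1 / (real n - 1)) \<cdot>\<^sub>m (upper_left k C - 1\<^sub>m k)"

text \<open>Right-hand side b_i = 1/(n-1) * sum_{j=k}^{n-1} c_ij w(a_j) (0-based).\<close>
definition HRE_b :: "nat \<Rightarrow> nat \<Rightarrow> real mat \<Rightarrow> (nat \<Rightarrow> real) \<Rightarrow> real vec" where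
  "HRE_b n k C wr = vec k (\<lambda>i. (1 / (real n - 1)) * (\<Sum>j\<in>{k..<n}. C $$ (i,j) * wr j))"

end

theory Submission
  imports Defs
begin

text \<open>
  The HRE matrix is a multiple of a characteristic matrix, \<open>A\<^sub>k = -(C\<^sub>k - n I\<^sub>k) / (n - 1)\<close>,
  so \<open>A\<^sub>k\<close> is singular exactly when \<open>n\<close> is an eigenvalue of \<open>C\<^sub>k\<close>. For \<open>k = 1\<close> the unit
  diagonal of \<open>C\<close> gives \<open>C\<^sub>1 = I\<^sub>1\<close> and \<open>A\<^sub>1 = I\<^sub>1\<close>. For \<open>k > 1\<close>
  the bound on \<open>CI(C\<^sub>k)\<close> says precisely \<open>\<rho>(C\<^sub>k) < n\<close>, and every eigenvalue has modulus at
  most \<open>\<rho>(C\<^sub>k)\<close>.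
\<close>

lemma invertible_mat_if_det_nonzero:
  fixes A :: "'a :: field mat"
  assumes A: "A \<in> carrier_mat n n" and det: "det A \<noteq> 0"
  shows "invertible_mat A"
proof -
  from det_non_zero_imp_unit[OF A det]
  obtain B where "B \<in> carrier_mat n n" "A * B = 1\<^sub>m n" "B * A = 1\<^sub>m n"
    unfolding Units_def ring_mat_def by auto
  with A show ?thesis
    unfolding invertible_mat_def inverts_mat_def by auto
qed

lemma invertible_mat_ex1_solution:
  fixes A :: "'a :: semiring_1 mat"
  assumes A: "A \<in> carrier_mat n n" and inv: "invertible_mat A" and b: "b \<in> carrier_vec n"
  shows "\<exists>!x. x \<in> carrier_vec n \<and> A *\<^sub>v x = b"
proof -
  from inv A obtain B where AB: "A * B = 1\<^sub>m n" and BA_rows: "B * A = 1\<^sub>m (dim_row B)"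
    unfolding invertible_mat_def inverts_mat_def by auto
  have rows: "dim_row B = n" using arg_cong[OF BA_rows, of dim_col] A by simp
  moreover have "dim_col B = n" using arg_cong[OF AB, of dim_col] by simp
  ultimately have B: "B \<in> carrier_mat n n" by auto
  from BA_rows rows have BA: "B * A = 1\<^sub>m n" by simp
  show ?thesis
  proof
    have "A *\<^sub>v (B *\<^sub>v b) = (A * B) *\<^sub>v b"
      using assoc_mult_mat_vec[OF A B b] by simp
    with AB b B show "B *\<^sub>v b \<in> carrier_vec n \<and> A *\<^sub>v (B *\<^sub>v b) = b"
      by simp
  next
    fix x assume x: "x \<in> carrier_vec n \<and> A *\<^sub>v x = b"
    hence "B *\<^sub>v b = (B * A) *\<^sub>v x"
      using assoc_mult_mat_vec[OF B A, of x] by simp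
    with BA x show "x = B *\<^sub>v b" by simp
  qed
qed

lemma eigenvalue_abs_le_spectral_radius:
  fixes A :: "real mat"
  assumes A: "A \<in> carrier_mat n n" and "0 < n" and ev: "eigenvalue A e"
  shows "\<bar>e\<bar> \<le> spectral_radius (map_mat complex_of_real A)"
proof -
  have A': "map_mat complex_of_real A \<in> carrier_mat n n" using A by simp
  from of_real_hom.eigenvalue_hom[OF A ev]
  have "complex_of_real e \<in> spectrum (map_mat complex_of_real A)"
    unfolding spectrum_def by simp
  from spectral_radius_mem_max(2)[OF A' \<open>0 < n\<close> imageI[OF this, of norm]]
  show ?thesis by simp
qed

lemma spectral_radius_lt_if_CI_lt:
  fixes M :: "real mat"
  assumes "M \<in> carrier_mat k k" and "1 < k" and "CI M < (real n - real k) / (real k - 1)"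
  shows "spectral_radius (map_mat complex_of_real M) < real n"
  using assms by (auto simp: CI_def divide_less_cancel)

lemma upper_left_carrier_mat: "upper_left k C \<in> carrier_mat k k"
  by (simp add: upper_left_def)

lemma HRE_A_carrier_mat: "HRE_A n k C \<in> carrier_mat k k"
  unfolding HRE_A_def using upper_left_carrier_mat
  by (intro minus_carrier_mat smult_carrier_mat) auto

lemma HRE_A_eq_smult_char_matrix:
  assumes "real n \<noteq> 1"
  shows "HRE_A n k C = (- 1 / (real n - 1)) \<cdot>\<^sub>m char_matrix (upper_left k C) (real n)"
  using assms
  by (intro eq_matI) (auto simp: HRE_A_def upper_left_def char_matrix_def field_simps)

lemma det_HRE_A_nonzero_iff:
  assumes "real n \<noteq> 1"
  shows "det (HRE_A n k C) \<noteq> 0 \<longleftrightarrow> \<not> eigenvalue (upper_left k C) (real n)"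
  using assms
  unfolding HRE_A_eq_smult_char_matrix[OF assms] eigenvalue_det[OF upper_left_carrier_mat]
  by simp

lemma HRE_A_one:
  assumes "pc_matrix n C" and "0 < n"
  shows "HRE_A n 1 C = 1\<^sub>m 1"
proof -
  from assms have "C $$ (0, 0) = 1" unfolding pc_matrix_def by blast
  then show ?thesis by (intro eq_matI) (auto simp: HRE_A_def upper_left_def)
qed

theorem mainTheorem1:
  fixes n k :: nat and C :: "real mat"
  assumes "pc_matrix n C"
    and "1 \<le> k" and "k < n"
    and "k = 1 \<or> (1 < k \<and> CI (upper_left k C) < (real n - real k) / (real k - 1))"
  shows "invertible_mat (HRE_A n k C) \<and>
         (\<forall>wr :: nat \<Rightarrow> real. (\<forall>j. k \<le> j \<and> j < n \<longrightarrow> wr j > 0) \<longrightarrow>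
            (\<exists>!w. w \<in> carrier_vec k \<and> HRE_A n k C *\<^sub>v w = HRE_b n k C wr))"
proof -
  have "det (HRE_A n k C) \<noteq> 0"
  proof (cases "k = 1")
    case True
    from assms have n: "0 < n" by simp
    show ?thesis unfolding True HRE_A_one[OF assms(1) n] by simp
  next
    case False
    note Ck = upper_left_carrier_mat[of k C]
    from False assms have "spectral_radius (map_mat complex_of_real (upper_left k C)) < real n"
      by (intro spectral_radius_lt_if_CI_lt[OF Ck]) auto
    with eigenvalue_abs_le_spectral_radius[OF Ck, of "real n"] assms
    have "\<not> eigenvalue (upper_left k C) (real n)" by fastforce
    with assms show ?thesis by (simp add: det_HRE_A_nonzero_iff)
  qed
  then have inv: "invertible_mat (HRE_A n k C)"
    by (rule invertible_mat_if_det_nonzero[OF HRE_A_carrier_mat])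
  have "\<exists>!w. w \<in> carrier_vec k \<and> HRE_A n k C *\<^sub>v w = HRE_b n k C wr" for wr
    by (rule invertible_mat_ex1_solution[OF HRE_A_carrier_mat inv]) (simp add: HRE_b_def)
  with inv show ?thesis by blast
qed

end
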